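(* Let $n,k$ be natural numbers with $2k\le n$, and let $N_{n,k}$ be the reflexive graph on vertex set $\{1,\dots,n\}$ with edge set $\{\{i,j\}:1\le i\le j\le n\}\setminus\{\{1,2\},\{3,4\},\dots,\{2k-1,2k\}\}$. Every proper homomorphic image of $N_{n,k}$ (i.e. every reflexive graph $H$ for which there is a non-injective surjective homomorphism $N_{n,k}\to H$) is isomorphic to $N_{m,l}$ for some $m,l$ with $2l<m$.
   Context: Graphs here are reflexive: a set with a symmetric edge relation having a loop at every vertex. A homomorphism maps edges to edges (and may collapse edges or non-edges to single vertices). The graphs $N_{n,k}$ are called subcomplete; $N_{2k,k}$ are proper subcomplete and $N_{n,k}$ with $2k<n$ are partial subcomplete. *)

theory Defs
  imports Main
begin

definition refl_graph :: "'a set \<Rightarrow> ('a \<Rightarrow> 'a \<Rightarrow> bool) \<Rightarrow> bool" where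
  "refl_graph V E \<longleftrightarrow>
     (\<forall>x y. E x y \<longrightarrow> x \<in> V \<and> y \<in> V) \<and>
     (\<forall>x y. E x y \<longrightarrow> E y x) \<and>
     (\<forall>x\<in>V. E x x)"

definition graph_hom ::
  "'a set \<Rightarrow> ('a \<Rightarrow> 'a \<Rightarrow> bool) \<Rightarrow> 'b set \<Rightarrow> ('b \<Rightarrow> 'b \<Rightarrow> bool) \<Rightarrow> ('a \<Rightarrow> 'b) \<Rightarrow> bool" where
  "graph_hom V E V' E' f \<longleftrightarrow>
     (\<forall>x\<in>V. f x \<in> V') \<and> (\<forall>x\<in>V. \<forall>y\<in>V. E x y \<longrightarrow> E' (f x) (f y))"

definition graph_iso ::
  "'a set \<Rightarrow> ('a \<Rightarrow> 'a \<Rightarrow> bool) \<Rightarrow> 'b set \<Rightarrow> ('b \<Rightarrow> 'b \<Rightarrow> bool) \<Rightarrow> ('a \<Rightarrow> 'b) \<Rightarrow> bool" where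
  "graph_iso V E V' E' f \<longleftrightarrow>
     bij_betw f V V' \<and> (\<forall>x\<in>V. \<forall>y\<in>V. E x y \<longleftrightarrow> E' (f x) (f y))"

definition graph_isomorphic ::
  "'a set \<Rightarrow> ('a \<Rightarrow> 'a \<Rightarrow> bool) \<Rightarrow> 'b set \<Rightarrow> ('b \<Rightarrow> 'b \<Rightarrow> bool) \<Rightarrow> bool" where
  "graph_isomorphic V E V' E' \<longleftrightarrow> (\<exists>f. graph_iso V E V' E' f)"

definition N_verts :: "nat \<Rightarrow> nat set" where
  "N_verts n = {1..n}"

definition N_edge :: "nat \<Rightarrow> nat \<Rightarrow> nat \<Rightarrow> nat \<Rightarrow> bool" where
  "N_edge n k i j \<longleftrightarrow>
     i \<in> {1..n} \<and> j \<in> {1..n} \<and> \<not> (\<exists>t\<in>{1..k}. {i, j} = {2*t - 1, 2*t})"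

end

theory Submission
  imports Defs
begin

text \<open>
  Call a pair \<open>{2t-1, 2t}\<close> of \<open>N\<^sub>n\<^sub>,\<^sub>k\<close> kept by a surjective homomorphism \<open>f\<close> onto \<open>H\<close> if its two
  vertices remain non-adjacent in \<open>H\<close>. Two vertices of \<open>H\<close> are non-adjacent exactly when they are
  the images of a kept pair, since every other pair of vertices of \<open>N\<^sub>n\<^sub>,\<^sub>k\<close> is an edge. A vertex
  \<open>s\<close> of a kept pair with partner \<open>s'\<close> is the only preimage of \<open>f s\<close>: any other vertex is
  adjacent to \<open>s'\<close>, so its image is adjacent to \<open>f s'\<close>, whereas \<open>f s\<close> is not. Hence the
  \<open>l\<close> kept pairs span a copy of \<open>N\<^sub>2\<^sub>l\<^sub>,\<^sub>l\<close> in \<open>H\<close>, and the remaining vertices of \<open>H\<close> are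
  adjacent to everything. There is at least one remaining vertex, because a fibre of
  \<open>f\<close> with two elements avoids the kept pairs; so \<open>H \<cong> N\<^sub>m\<^sub>,\<^sub>l\<close> with \<open>2l < m\<close>.
\<close>

section \<open>The pairs of \<open>N\<^sub>n\<^sub>,\<^sub>k\<close>\<close>

text \<open>Vertices \<open>2t-1\<close> and \<open>2t\<close> form pair number \<open>t\<close>.\<close>
definition pair_of :: "nat \<Rightarrow> nat" where
  "pair_of i = (i + 1) div 2"

definition partners :: "nat \<Rightarrow> nat \<Rightarrow> bool" where
  "partners i j \<longleftrightarrow> i \<noteq> j \<and> pair_of i = pair_of j"

lemma pair_of_two_times_minus: "r \<le> 1 \<Longrightarrow> 0 < t \<Longrightarrow> pair_of (2*t - r) = t"
  unfolding pair_of_def by (cases r) auto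

lemma two_times_minus_mod2: "r \<le> 1 \<Longrightarrow> 0 < t \<Longrightarrow> (2*t - r) mod 2 = (r::nat)"
  by (cases r; cases t) auto

lemma two_times_pair_of_minus_mod2: "2 * pair_of i - i mod 2 = i"
  unfolding pair_of_def by (cases "even i") (auto elim!: evenE oddE)

lemma pair_of_mod2_inj:
  assumes "pair_of i = pair_of j" "i mod 2 = j mod 2"
  shows "i = j"
proof -
  have "i = 2 * pair_of i - i mod 2"
    by (simp only: two_times_pair_of_minus_mod2)
  also have "\<dots> = 2 * pair_of j - j mod 2"
    using assms by simp
  also have "\<dots> = j"
    by (rule two_times_pair_of_minus_mod2)
  finally show ?thesis .
qed

lemma vimage_pair_of_atLeastAtMost: "pair_of -` {1..l} = {1..2*l}"
  unfolding pair_of_def by auto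

lemma pair_of_in_atLeastAtMost_iff: "pair_of i \<in> {1..l} \<longleftrightarrow> i \<in> {1..2*l}"
  using vimage_pair_of_atLeastAtMost by blast

lemma partners_unique:
  assumes "partners a c" "partners b c"
  shows "a = b"
proof (rule pair_of_mod2_inj)
  show "pair_of a = pair_of b"
    using assms unfolding partners_def by simp
  have "a mod 2 \<noteq> c mod 2" "b mod 2 \<noteq> c mod 2"
    using assms pair_of_mod2_inj unfolding partners_def by blast+
  then show "a mod 2 = b mod 2"
    by presburger
qed

lemma ex_partners: "0 < a \<Longrightarrow> \<exists>b. partners a b"
  unfolding partners_def pair_of_def
  by (rule exI[of _ "if odd a then a + 1 else a - 1"]) (auto elim!: evenE oddE)

lemma doubleton_iff_partners:
  assumes "0 < t"
  shows "{a, b} = {2*t - 1, 2*t} \<longleftrightarrow> partners a b \<and> pair_of a = t"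
proof
  assume ab: "{a, b} = {2*t - 1, 2*t}"
  have "pair_of (2*t - 1) = t" "pair_of (2*t) = t"
    using pair_of_two_times_minus[of 1 t] pair_of_two_times_minus[of 0 t] assms by simp_all
  moreover have "2*t - 1 \<noteq> 2*t" using assms by simp
  ultimately show "partners a b \<and> pair_of a = t"
    using ab unfolding partners_def by (auto simp: doubleton_eq_iff)
next
  assume "partners a b \<and> pair_of a = t"
  then have "a \<noteq> b" "a = 2*t - a mod 2" "b = 2*t - b mod 2"
    using two_times_pair_of_minus_mod2[of a] two_times_pair_of_minus_mod2[of b]
    unfolding partners_def by auto
  then show "{a, b} = {2*t - 1, 2*t}" by (cases "even a"; cases "even b") auto
qed

lemma N_edge_iff:
  "N_edge n k i j \<longleftrightarrow> i \<in> {1..n} \<and> j \<in> {1..n} \<and> \<not> (partners i j \<and> pair_of i \<in> {1..k})"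
  unfolding N_edge_def using doubleton_iff_partners by fastforce

lemma N_edge_restrict:
  "m' \<le> m \<Longrightarrow> i \<in> {1..m'} \<Longrightarrow> j \<in> {1..m'} \<Longrightarrow> N_edge m l i j \<longleftrightarrow> N_edge m' l i j"
  unfolding N_edge_def by auto

lemma N_edge_beyond_pairs:
  assumes "i \<in> {1..m}" "j \<in> {1..m}" "2*l < max i j"
  shows "N_edge m l i j"
proof -
  have "pair_of i \<notin> {1..l} \<or> pair_of j \<notin> {1..l}"
    using assms(3) pair_of_in_atLeastAtMost_iff by auto
  then show ?thesis
    using assms(1,2) unfolding N_edge_iff partners_def by auto
qed

section \<open>Relabelling pairs\<close>

text \<open>Moves pair \<open>t\<close> to pair \<open>\<tau> t\<close>, keeping each vertex's position within its pair.\<close>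
definition relabel_pairs :: "(nat \<Rightarrow> nat) \<Rightarrow> nat \<Rightarrow> nat" where
  "relabel_pairs \<tau> i = 2 * \<tau> (pair_of i) - i mod 2"

lemma pair_of_relabel_pairs:
  "\<tau> (pair_of i) \<noteq> 0 \<Longrightarrow> pair_of (relabel_pairs \<tau> i) = \<tau> (pair_of i)"
  by (simp add: relabel_pairs_def pair_of_two_times_minus)

lemma relabel_pairs_mod2: "\<tau> (pair_of i) \<noteq> 0 \<Longrightarrow> relabel_pairs \<tau> i mod 2 = i mod 2"
  by (simp add: relabel_pairs_def two_times_minus_mod2)

lemma relabel_pairs_relabel_pairs:
  assumes "pair_of i \<in> A" "\<tau> (pair_of i) \<in> B" "0 \<notin> A" "0 \<notin> B"
    and "\<tau>' (\<tau> (pair_of i)) = pair_of i"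
  shows "relabel_pairs \<tau>' (relabel_pairs \<tau> i) = i"
proof (rule pair_of_mod2_inj)
  have "pair_of i \<noteq> 0" "\<tau> (pair_of i) \<noteq> 0"
    using assms(1-4) by metis+
  then show "pair_of (relabel_pairs \<tau>' (relabel_pairs \<tau> i)) = pair_of i"
    "relabel_pairs \<tau>' (relabel_pairs \<tau> i) mod 2 = i mod 2"
    using assms(5) by (simp_all add: pair_of_relabel_pairs relabel_pairs_mod2)
qed

lemma bij_betw_relabel_pairs:
  assumes \<tau>: "bij_betw \<tau> A B" and "0 \<notin> A" "0 \<notin> B"
  shows "bij_betw (relabel_pairs \<tau>) (pair_of -` A) (pair_of -` B)"
proof (rule bij_betw_byWitness[where f' = "relabel_pairs (the_inv_into A \<tau>)"])
  let ?\<tau>' = "the_inv_into A \<tau>"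
  have \<tau>': "bij_betw ?\<tau>' B A"
    using \<tau> by (rule bij_betw_the_inv_into)
  have \<tau>_in: "\<tau> t \<in> B" if "t \<in> A" for t
    using bij_betwE[OF \<tau>] that by blast
  have \<tau>'_in: "?\<tau>' t \<in> A" if "t \<in> B" for t
    using bij_betwE[OF \<tau>'] that by blast
  have inv1: "?\<tau>' (\<tau> t) = t" if "t \<in> A" for t
    using \<tau> that unfolding bij_betw_def by (blast intro: the_inv_into_f_f)
  have inv2: "\<tau> (?\<tau>' t) = t" if "t \<in> B" for t
    using \<tau> that by (simp add: bij_betw_def f_the_inv_into_f)
  show "\<forall>i\<in>pair_of -` A. relabel_pairs ?\<tau>' (relabel_pairs \<tau> i) = i"
  proof
    fix i assume "i \<in> pair_of -` A"
    then have i: "pair_of i \<in> A" "\<tau> (pair_of i) \<in> B"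
      using \<tau>_in by auto
    show "relabel_pairs ?\<tau>' (relabel_pairs \<tau> i) = i"
      using i assms(2,3) inv1[OF i(1)] by (rule relabel_pairs_relabel_pairs)
  qed
  show "\<forall>i\<in>pair_of -` B. relabel_pairs \<tau> (relabel_pairs ?\<tau>' i) = i"
  proof
    fix i assume "i \<in> pair_of -` B"
    then have i: "pair_of i \<in> B" "?\<tau>' (pair_of i) \<in> A"
      using \<tau>'_in by auto
    show "relabel_pairs \<tau> (relabel_pairs ?\<tau>' i) = i"
      using i assms(3,2) inv2[OF i(1)] by (rule relabel_pairs_relabel_pairs)
  qed
  show "relabel_pairs \<tau> ` pair_of -` A \<subseteq> pair_of -` B"
  proof
    fix j assume "j \<in> relabel_pairs \<tau> ` pair_of -` A"
    then obtain i where i: "pair_of i \<in> A" and j: "j = relabel_pairs \<tau> i" by blast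
    have "\<tau> (pair_of i) \<in> B"
      using \<tau>_in i by blast
    moreover from this have "\<tau> (pair_of i) \<noteq> 0"
      using assms(3) by metis
    ultimately show "j \<in> pair_of -` B"
      unfolding j by (simp add: pair_of_relabel_pairs)
  qed
  show "relabel_pairs ?\<tau>' ` pair_of -` B \<subseteq> pair_of -` A"
  proof
    fix j assume "j \<in> relabel_pairs ?\<tau>' ` pair_of -` B"
    then obtain i where i: "pair_of i \<in> B" and j: "j = relabel_pairs ?\<tau>' i" by blast
    have "?\<tau>' (pair_of i) \<in> A"
      using \<tau>'_in i by blast
    moreover from this have "?\<tau>' (pair_of i) \<noteq> 0"
      using assms(2) by metis
    ultimately show "j \<in> pair_of -` A"
      unfolding j by (simp add: pair_of_relabel_pairs)
  qed
qed

lemma partners_relabel_pairs_iff: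
  assumes \<tau>: "bij_betw \<tau> A B" and "0 \<notin> A" "0 \<notin> B" "pair_of i \<in> A" "pair_of j \<in> A"
  shows "partners (relabel_pairs \<tau> i) (relabel_pairs \<tau> j) \<longleftrightarrow> partners i j"
proof -
  have inj: "inj_on (relabel_pairs \<tau>) (pair_of -` A)"
    using bij_betw_relabel_pairs[OF assms(1-3)] by (rule bij_betw_imp_inj_on)
  have "i \<in> pair_of -` A" "j \<in> pair_of -` A"
    using assms(4,5) by simp_all
  then have relabel_eq: "relabel_pairs \<tau> i = relabel_pairs \<tau> j \<longleftrightarrow> i = j"
    by (rule inj_on_eq_iff[OF inj])
  have \<tau>_eq: "\<tau> (pair_of i) = \<tau> (pair_of j) \<longleftrightarrow> pair_of i = pair_of j"
    using bij_betw_imp_inj_on[OF \<tau>] assms(4,5) by (rule inj_on_eq_iff)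
  have "\<tau> (pair_of i) \<in> B" "\<tau> (pair_of j) \<in> B"
    using bij_betwE[OF \<tau>] assms(4,5) by blast+
  then have "\<tau> (pair_of i) \<noteq> 0" "\<tau> (pair_of j) \<noteq> 0"
    using assms(3) by metis+
  then have "pair_of (relabel_pairs \<tau> i) = \<tau> (pair_of i)"
    "pair_of (relabel_pairs \<tau> j) = \<tau> (pair_of j)"
    by (simp_all add: pair_of_relabel_pairs)
  then show ?thesis
    unfolding partners_def by (simp only: relabel_eq \<tau>_eq)
qed

lemma graph_isomorphic_sym:
  assumes "graph_isomorphic A EA B EB"
  shows "graph_isomorphic B EB A EA"
proof -
  obtain g where g: "bij_betw g A B" and e: "\<forall>x\<in>A. \<forall>y\<in>A. EA x y \<longleftrightarrow> EB (g x) (g y)"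
    using assms unfolding graph_isomorphic_def graph_iso_def by blast
  let ?h = "the_inv_into A g"
  have h: "bij_betw ?h B A"
    using g by (rule bij_betw_the_inv_into)
  have "EB x y \<longleftrightarrow> EA (?h x) (?h y)" if "x \<in> B" "y \<in> B" for x y
  proof -
    have "?h x \<in> A" "?h y \<in> A"
      using h that by (auto dest: bij_betwE)
    moreover have "g (?h x) = x"
      by (rule f_the_inv_into_f_bij_betw[OF g]) (rule that(1))
    moreover have "g (?h y) = y"
      by (rule f_the_inv_into_f_bij_betw[OF g]) (rule that(2))
    ultimately show ?thesis using e by metis
  qed
  then show ?thesis
    using h unfolding graph_isomorphic_def graph_iso_def by blast
qed

text \<open>\<open>N\<^sub>2\<^sub>l\<^sub>+\<^sub>r\<^sub>,\<^sub>l\<close> is \<open>N\<^sub>2\<^sub>l\<^sub>,\<^sub>l\<close> together with \<open>r\<close> vertices adjacent to everything.\<close>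
lemma graph_isomorphic_N_add_universal:
  assumes iso: "graph_iso (N_verts (2*l)) (N_edge (2*l) l) A E g0"
    and "A \<subseteq> V" "finite V"
    and universal: "\<And>x y. x \<in> V \<Longrightarrow> y \<in> V - A \<Longrightarrow> E x y \<and> E y x"
  shows "graph_isomorphic (N_verts (2*l + card (V - A))) (N_edge (2*l + card (V - A)) l) V E"
proof -
  define m where "m = 2*l + card (V - A)"
  obtain \<rho> where \<rho>: "bij_betw \<rho> {2*l+1..m} (V - A)"
    using finite_same_card_bij[of "{2*l+1..m}" "V - A"] \<open>finite V\<close> unfolding m_def by auto
  define g where "g i = (if i \<le> 2*l then g0 i else \<rho> i)" for i
  have "bij_betw g {1..2*l} A \<longleftrightarrow> bij_betw g0 {1..2*l} A"
    by (rule bij_betw_cong) (simp add: g_def)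
  then have "bij_betw g {1..2*l} A"
    using iso unfolding graph_iso_def N_verts_def by blast
  moreover have "bij_betw g {2*l+1..m} (V - A) \<longleftrightarrow> bij_betw \<rho> {2*l+1..m} (V - A)"
    by (rule bij_betw_cong) (simp add: g_def)
  then have "bij_betw g {2*l+1..m} (V - A)"
    using \<rho> by blast
  ultimately have "bij_betw g ({1..2*l} \<union> {2*l+1..m}) (A \<union> (V - A))"
    by (rule bij_betw_combine) blast
  moreover have "{1..2*l} \<union> {2*l+1..m} = {1..m}" "A \<union> (V - A) = V"
    using \<open>A \<subseteq> V\<close> unfolding m_def by auto
  ultimately have bij: "bij_betw g {1..m} V" by simp
  have "N_edge m l i j \<longleftrightarrow> E (g i) (g j)" if ij: "i \<in> {1..m}" "j \<in> {1..m}" for i j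
  proof (cases "i \<le> 2*l \<and> j \<le> 2*l")
    case True
    then have "N_edge m l i j \<longleftrightarrow> N_edge (2*l) l i j"
      using ij unfolding m_def by (intro N_edge_restrict) auto
    also have "\<dots> \<longleftrightarrow> E (g i) (g j)"
      using iso True ij unfolding graph_iso_def N_verts_def g_def by auto
    finally show ?thesis .
  next
    case False
    then have "g i \<in> V - A \<or> g j \<in> V - A"
      using \<rho> ij by (auto simp: g_def dest: bij_betwE)
    moreover have "g i \<in> V" "g j \<in> V"
      using bij ij by (auto dest: bij_betwE)
    ultimately have "E (g i) (g j)"
      using universal by blast
    moreover have "N_edge m l i j"
      using False ij by (intro N_edge_beyond_pairs) auto
    ultimately show ?thesis by simp
  qed
  then show ?thesis
    using bij unfolding graph_isomorphic_def graph_iso_def N_verts_def m_def by blast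
qed

section \<open>Homomorphic images of \<open>N\<^sub>n\<^sub>,\<^sub>k\<close>\<close>

locale N_hom_image =
  fixes n k :: nat and V :: "'b set" and E :: "'b \<Rightarrow> 'b \<Rightarrow> bool" and f :: "nat \<Rightarrow> 'b"
  assumes pairs_fit: "2 * k \<le> n"
    and refl_graph: "refl_graph V E"
    and hom: "graph_hom (N_verts n) (N_edge n k) V E f"
    and onto: "f ` N_verts n = V"
begin

definition kept_pairs :: "nat set" where
  "kept_pairs = {t \<in> {1..k}. \<not> E (f (2*t - 1)) (f (2*t))}"

lemma kept_pairs_subset: "kept_pairs \<subseteq> {1..k}"
  unfolding kept_pairs_def by auto

lemma kept_vertices_subset: "pair_of -` kept_pairs \<subseteq> N_verts n"
proof -
  have "pair_of -` kept_pairs \<subseteq> pair_of -` {1..k}"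
    using kept_pairs_subset by blast
  also have "\<dots> \<subseteq> N_verts n"
    using pairs_fit unfolding vimage_pair_of_atLeastAtMost N_verts_def by auto
  finally show ?thesis .
qed

lemma E_sym: "E x y \<Longrightarrow> E y x"
  using refl_graph unfolding refl_graph_def by blast

lemma image_edge_iff:
  assumes "a \<in> N_verts n" "b \<in> N_verts n"
  shows "E (f a) (f b) \<longleftrightarrow> \<not> (partners a b \<and> pair_of a \<in> kept_pairs)"
proof (cases "partners a b \<and> pair_of a \<in> {1..k}")
  case True
  define t where "t = pair_of a"
  have "0 < t"
    using True unfolding t_def by auto
  have "{a, b} = {2*t - 1, 2*t}"
    using True doubleton_iff_partners[OF \<open>0 < t\<close>, of a b] unfolding t_def by blast
  then have "E (f a) (f b) \<longleftrightarrow> E (f (2*t - 1)) (f (2*t))"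
    using E_sym by (auto simp: doubleton_eq_iff)
  then show ?thesis
    using True unfolding kept_pairs_def t_def by auto
next
  case False
  then have "N_edge n k a b"
    using assms unfolding N_edge_iff N_verts_def by blast
  then have "E (f a) (f b)"
    using hom assms unfolding graph_hom_def by blast
  then show ?thesis
    using False kept_pairs_subset by blast
qed

lemma kept_vertex_fibre:
  assumes s: "s \<in> pair_of -` kept_pairs" and a: "a \<in> N_verts n" "f a = f s"
  shows "a = s"
proof -
  have "0 < s"
    using s kept_pairs_subset pair_of_in_atLeastAtMost_iff[of s k] by auto
  then obtain s' where s': "partners s s'"
    using ex_partners by blast
  then have s'_kept: "s' \<in> pair_of -` kept_pairs"
    using s unfolding partners_def by simp
  have s_in: "s \<in> N_verts n" and s'_in: "s' \<in> N_verts n"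
    using s s'_kept kept_vertices_subset by blast+
  have "\<not> E (f s) (f s')"
    using image_edge_iff[OF s_in s'_in] s' s by simp
  then have "\<not> E (f a) (f s')"
    using a(2) by simp
  then have "partners a s'"
    using image_edge_iff[OF a(1) s'_in] by blast
  then show "a = s"
    using s' by (rule partners_unique)
qed

lemma ex_graph_iso_kept_part:
  "\<exists>g. graph_iso (N_verts (2 * card kept_pairs)) (N_edge (2 * card kept_pairs) (card kept_pairs))
         (f ` pair_of -` kept_pairs) E g"
proof -
  let ?l = "card kept_pairs" and ?S = "pair_of -` kept_pairs"
  have "finite kept_pairs"
    using kept_pairs_subset finite_subset by blast
  then obtain \<tau> where \<tau>: "bij_betw \<tau> {1..?l} kept_pairs"
    using ex_bij_betw_nat_finite_1 by blast
  have zero: "0 \<notin> {1..?l}" "0 \<notin> kept_pairs"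
    using kept_pairs_subset by auto
  have \<sigma>: "bij_betw (relabel_pairs \<tau>) {1..2 * ?l} ?S"
    using bij_betw_relabel_pairs[OF \<tau> zero] unfolding vimage_pair_of_atLeastAtMost .
  have "inj_on f ?S"
    using kept_vertex_fibre kept_vertices_subset by (intro inj_onI) blast
  then have "bij_betw (f \<circ> relabel_pairs \<tau>) {1..2 * ?l} (f ` ?S)"
    using \<sigma> by (auto intro: bij_betw_trans inj_on_imp_bij_betw)
  moreover have "N_edge (2 * ?l) ?l i j \<longleftrightarrow> E (f (relabel_pairs \<tau> i)) (f (relabel_pairs \<tau> j))"
    if "i \<in> {1..2 * ?l}" "j \<in> {1..2 * ?l}" for i j
  proof -
    have ij: "pair_of i \<in> {1..?l}" "pair_of j \<in> {1..?l}"
      using that pair_of_in_atLeastAtMost_iff by blast+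
    have "relabel_pairs \<tau> i \<in> ?S" "relabel_pairs \<tau> j \<in> ?S"
      using \<sigma> that by (auto dest: bij_betwE)
    then have "E (f (relabel_pairs \<tau> i)) (f (relabel_pairs \<tau> j)) \<longleftrightarrow>
               \<not> partners (relabel_pairs \<tau> i) (relabel_pairs \<tau> j)"
      using image_edge_iff kept_vertices_subset by blast
    also have "\<dots> \<longleftrightarrow> \<not> partners i j"
      using partners_relabel_pairs_iff[OF \<tau> zero ij] by simp
    also have "\<dots> \<longleftrightarrow> N_edge (2 * ?l) ?l i j"
      using that ij unfolding N_edge_iff by auto
    finally show ?thesis by simp
  qed
  ultimately show ?thesis
    unfolding graph_iso_def N_verts_def by (intro exI[of _ "f \<circ> relabel_pairs \<tau>"]) auto
qed

lemma unkept_vertex_universal: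
  assumes "x \<in> V" "y \<in> V - f ` pair_of -` kept_pairs"
  shows "E x y"
proof -
  obtain a b where "a \<in> N_verts n" "b \<in> N_verts n" "x = f a" "y = f b"
    using assms onto by blast
  moreover have "pair_of b \<notin> kept_pairs"
    using assms \<open>y = f b\<close> by blast
  ultimately show ?thesis
    using image_edge_iff unfolding partners_def by auto
qed

lemma unkept_vertex_exists:
  assumes "\<not> inj_on f (N_verts n)"
  shows "V - f ` pair_of -` kept_pairs \<noteq> {}"
proof -
  obtain a b where ab: "a \<in> N_verts n" "b \<in> N_verts n" "a \<noteq> b" "f a = f b"
    using assms unfolding inj_on_def by blast
  have "f a \<notin> f ` pair_of -` kept_pairs"
  proof
    assume "f a \<in> f ` pair_of -` kept_pairs"
    then obtain s where "s \<in> pair_of -` kept_pairs" "f a = f s" by blast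
    then show False
      using kept_vertex_fibre ab by metis
  qed
  then show ?thesis
    using ab onto by blast
qed

end

theorem proposition3p2:
  fixes n k :: nat and V :: "'b set" and E :: "'b \<Rightarrow> 'b \<Rightarrow> bool" and f :: "nat \<Rightarrow> 'b"
  assumes "2 * k \<le> n"
    and "refl_graph V E"
    and "graph_hom (N_verts n) (N_edge n k) V E f"
    and "f ` N_verts n = V"
    and "\<not> inj_on f (N_verts n)"
  shows "\<exists>m l. 2 * l < m \<and> graph_isomorphic V E (N_verts m) (N_edge m l)"
proof -
  interpret N_hom_image n k V E f
    using assms(1-4) by unfold_locales
  let ?l = "card kept_pairs" and ?A = "f ` pair_of -` kept_pairs"
  let ?m = "2 * ?l + card (V - ?A)"
  obtain g0 where g0: "graph_iso (N_verts (2 * ?l)) (N_edge (2 * ?l) ?l) ?A E g0"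
    using ex_graph_iso_kept_part by blast
  have "finite V"
    using onto unfolding N_verts_def by blast
  moreover have "?A \<subseteq> V"
    using onto kept_vertices_subset by blast
  ultimately have "graph_isomorphic (N_verts ?m) (N_edge ?m ?l) V E"
    using g0 unkept_vertex_universal E_sym by (intro graph_isomorphic_N_add_universal) blast+
  then have "graph_isomorphic V E (N_verts ?m) (N_edge ?m ?l)"
    by (rule graph_isomorphic_sym)
  moreover have "2 * ?l < ?m"
    using unkept_vertex_exists[OF assms(5)] \<open>finite V\<close> by (simp add: card_gt_0_iff)
  ultimately show ?thesis by blast
qed

end
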